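(* Let $k$ be an algebraically closed field of characteristic $p\ge0$, $n\ge1$, and let $\pi : \mathrm{GL}(n,k)\to\mathrm{PGL}(n,k)$ be the natural surjection. Let $\theta_i : \mathbb{G}_a\to\mathrm{PGL}(n,k)$ $(i=1,2)$ be homomorphisms of algebraic groups and $\varphi_i : \mathbb{G}_a\to\mathrm{GL}(n,k)$ $(i=1,2)$ homomorphisms of algebraic groups with $\theta_i = \pi\circ\varphi_i$. Then the following are equivalent: (1) $\theta_1$ and $\theta_2$ are equivalent, i.e. there exists $P\in\mathrm{GL}(n,k)$ with $\theta_2(t) = [P]\,\theta_1(t)\,[P]^{-1}$ for all $t\in\mathbb{G}_a$; (2) $\varphi_1$ and $\varphi_2$ are equivalent, i.e. there exists $Q\in\mathrm{GL}(n,k)$ with $\varphi_2(t) = Q\,\varphi_1(t)\,Q^{-1}$ for all $t\in\mathbb{G}_a$.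
   Context: $\mathbb{G}_a$ denotes the additive group of $k$; $[P] = \pi(P)$ denotes the class of $P$ in $\mathrm{PGL}(n,k)$. *)

theory Defs
  imports "HOL-Analysis.Analysis" "HOL-Computational_Algebra.Polynomial"
begin

text \<open>Homomorphism of algebraic groups from the additive group G_a of k to GL(n,k):
  a group homomorphism (for addition in k, matrix product in GL) whose matrix
  entries are regular functions on the affine line, i.e. polynomials in t.\<close>
definition Ga_hom_GL :: "('k::field \<Rightarrow> 'k^'n^'n) \<Rightarrow> bool" where
  "Ga_hom_GL \<phi> \<longleftrightarrow>
     (\<exists>F :: 'n \<Rightarrow> 'n \<Rightarrow> 'k poly. \<forall>t i j. \<phi> t $ i $ j = poly (F i j) t)
     \<and> (\<forall>t. invertible (\<phi> t))
     \<and> (\<forall>s t. \<phi> (s + t) = \<phi> s ** \<phi> t)"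

text \<open>PGL(n,k) = GL(n,k) modulo nonzero scalars; an element of PGL is represented
  by its class, the set of nonzero scalar multiples of an invertible matrix.
  pgl_proj is the natural surjection pi.\<close>
definition pgl_proj :: "'k::field^'n^'n \<Rightarrow> ('k^'n^'n) set" where
  "pgl_proj A = {(\<chi> i j. c * A $ i $ j) | c. c \<noteq> 0}"

definition pgl_mult :: "('k::field^'n^'n) set \<Rightarrow> ('k^'n^'n) set \<Rightarrow> ('k^'n^'n) set" where
  "pgl_mult X Y = {A ** B | A B. A \<in> X \<and> B \<in> Y}"

definition pgl_inv :: "('k::field^'n^'n) set \<Rightarrow> ('k^'n^'n) set" where
  "pgl_inv X = matrix_inv ` X"

end

theory Submission
  imports Defs
begin

text \<open>If \<open>\<pi> \<circ> \<phi>\<^sub>2 = \<pi> \<circ> (P \<phi>\<^sub>1 P\<inverse>)\<close>, then \<open>\<phi>\<^sub>2(t) = c(t) P \<phi>\<^sub>1(t) P\<inverse>\<close> for scalars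
  \<open>c(t)\<close>. The determinant of a homomorphism \<open>\<bbbG>\<^sub>a \<rightarrow> GL(n)\<close> is a polynomial without roots,
  hence constant \<open>1\<close>, so every \<open>c(t)\<close> is an \<open>n\<close>-th root of unity. As \<open>k\<close> is infinite,
  \<open>c\<close> takes one value \<open>z\<close> infinitely often, and the polynomial entries of \<open>\<phi>\<^sub>2\<close> and
  \<open>z P \<phi>\<^sub>1 P\<inverse>\<close> then agree everywhere; evaluating at \<open>t = 0\<close> gives \<open>z = 1\<close>.
  Thus homomorphisms \<open>\<bbbG>\<^sub>a \<rightarrow> GL(n)\<close> with the same image in \<open>PGL(n)\<close> are equal,
  and the equivalence follows.\<close>

definition matrix_scale :: "'a::times \<Rightarrow> 'a^'n^'m \<Rightarrow> 'a^'n^'m" where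
  "matrix_scale c A = (\<chi> i j. c * A $ i $ j)"

lemma matrix_scale_1 [simp]: "matrix_scale (1::'a::monoid_mult) A = A"
  by (simp add: matrix_scale_def vec_eq_iff)

lemma matrix_scale_scale: "matrix_scale c (matrix_scale d A) = matrix_scale (c * d) A"
  for c :: "'a::semigroup_mult"
  by (simp add: matrix_scale_def vec_eq_iff mult.assoc)

lemma matrix_scale_mult_left:
  "matrix_scale c A ** B = matrix_scale c (A ** B)" for c :: "'a::comm_semiring_1"
  by (simp add: matrix_scale_def matrix_matrix_mult_def vec_eq_iff sum_distrib_left mult.assoc)

lemma matrix_scale_mult_right:
  "A ** matrix_scale c B = matrix_scale c (A ** B)" for c :: "'a::comm_semiring_1"
  by (simp add: matrix_scale_def matrix_matrix_mult_def vec_eq_iff sum_distrib_left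
      mult.left_commute)

lemma det_matrix_scale: "det (matrix_scale c A) = c ^ CARD('n) * det A"
  for A :: "'a::comm_ring_1^'n^'n"
  by (simp add: det_def matrix_scale_def prod.distrib sum_distrib_left mult.left_commute)

lemma matrix_scale_mat_1_eq_mat_1_iff:
  "matrix_scale c (mat 1 :: 'a::comm_semiring_1^'n^'n) = mat 1 \<longleftrightarrow> c = 1"
proof
  fix i :: 'n
  assume "matrix_scale c (mat 1 :: 'a^'n^'n) = mat 1"
  then have "matrix_scale c (mat 1 :: 'a^'n^'n) $ i $ i = mat 1 $ i $ i" by simp
  then show "c = 1" by (simp add: matrix_scale_def mat_def)
qed simp

lemma matrix_inv_right: "invertible A \<Longrightarrow> A ** matrix_inv A = mat 1"
  and matrix_inv_left: "invertible A \<Longrightarrow> matrix_inv A ** A = mat 1"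
  for A :: "'a::semiring_1^'n^'n"
  unfolding invertible_def matrix_inv_def by (metis (mono_tags, lifting) someI_ex)+

lemma matrix_inv_unique:
  fixes A B :: "'a::semiring_1^'n^'n"
  assumes "A ** B = mat 1" and "B ** A = mat 1"
  shows "matrix_inv A = B"
proof -
  have "invertible A" using assms unfolding invertible_def by blast
  then have "matrix_inv A = (B ** A) ** matrix_inv A" using assms(2) by simp
  also have "\<dots> = B" using \<open>invertible A\<close> by (simp add: matrix_mul_assoc[symmetric] matrix_inv_right)
  finally show ?thesis .
qed

lemma invertible_matrix_inv: "invertible A \<Longrightarrow> invertible (matrix_inv A)"
  for A :: "'a::semiring_1^'n^'n"
  using matrix_inv_left matrix_inv_right unfolding invertible_def by blast

lemma matrix_inv_matrix_scale:
  fixes A :: "'a::field^'n^'n"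
  assumes "invertible A" and "c \<noteq> 0"
  shows "matrix_inv (matrix_scale c A) = matrix_scale (inverse c) (matrix_inv A)"
  using assms by (intro matrix_inv_unique)
    (simp_all add: matrix_scale_mult_left matrix_scale_mult_right matrix_scale_scale
      matrix_inv_left matrix_inv_right)

lemma mem_pgl_proj_iff: "B \<in> pgl_proj A \<longleftrightarrow> (\<exists>c. c \<noteq> 0 \<and> B = matrix_scale c A)"
  by (auto simp: pgl_proj_def matrix_scale_def)

lemma matrix_scale_in_pgl_proj: "c \<noteq> 0 \<Longrightarrow> matrix_scale c A \<in> pgl_proj A"
  by (auto simp: mem_pgl_proj_iff)

lemma pgl_proj_self: "A \<in> pgl_proj A"
  using matrix_scale_in_pgl_proj[of 1 A] by simp

lemma pgl_proj_eqD:
  assumes "pgl_proj A = pgl_proj B"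
  shows "\<exists>c. c \<noteq> 0 \<and> A = matrix_scale c B"
  using pgl_proj_self[of A] assms by (simp add: mem_pgl_proj_iff)

lemma pgl_mult_pgl_proj: "pgl_mult (pgl_proj A) (pgl_proj B) = pgl_proj (A ** B)"
proof (intro set_eqI iffI)
  fix C
  assume "C \<in> pgl_mult (pgl_proj A) (pgl_proj B)"
  then obtain a b where ab: "a \<noteq> 0" "b \<noteq> 0" "C = matrix_scale a A ** matrix_scale b B"
    unfolding pgl_mult_def mem_pgl_proj_iff by blast
  then have "C = matrix_scale (a * b) (A ** B)"
    by (simp add: matrix_scale_mult_left matrix_scale_mult_right matrix_scale_scale mult.commute)
  then show "C \<in> pgl_proj (A ** B)" using ab(1,2) by (simp add: matrix_scale_in_pgl_proj)
next
  fix C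
  assume "C \<in> pgl_proj (A ** B)"
  then obtain c where "c \<noteq> 0" "C = matrix_scale c A ** B"
    unfolding mem_pgl_proj_iff by (auto simp: matrix_scale_mult_left)
  then show "C \<in> pgl_mult (pgl_proj A) (pgl_proj B)"
    unfolding pgl_mult_def by (blast intro: matrix_scale_in_pgl_proj pgl_proj_self)
qed

lemma pgl_inv_pgl_proj:
  assumes "invertible A"
  shows "pgl_inv (pgl_proj A) = pgl_proj (matrix_inv A)"
proof (intro set_eqI iffI)
  fix C
  assume "C \<in> pgl_inv (pgl_proj A)"
  then obtain a where a: "a \<noteq> 0" "C = matrix_inv (matrix_scale a A)"
    unfolding pgl_inv_def by (auto simp: mem_pgl_proj_iff)
  then have "C = matrix_scale (inverse a) (matrix_inv A)"
    using matrix_inv_matrix_scale[OF assms a(1)] by simp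
  then show "C \<in> pgl_proj (matrix_inv A)" using a(1) by (simp add: matrix_scale_in_pgl_proj)
next
  fix C
  assume "C \<in> pgl_proj (matrix_inv A)"
  then obtain c where c: "c \<noteq> 0" "C = matrix_scale c (matrix_inv A)"
    unfolding mem_pgl_proj_iff by blast
  then have "C = matrix_inv (matrix_scale (inverse c) A)"
    using matrix_inv_matrix_scale[OF assms, of "inverse c"] by simp
  moreover have "matrix_scale (inverse c) A \<in> pgl_proj A"
    using c(1) by (simp add: matrix_scale_in_pgl_proj)
  ultimately show "C \<in> pgl_inv (pgl_proj A)" unfolding pgl_inv_def by blast
qed

lemma pgl_conj_pgl_proj:
  assumes "invertible P"
  shows "pgl_mult (pgl_mult (pgl_proj P) (pgl_proj A)) (pgl_inv (pgl_proj P))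
           = pgl_proj (P ** A ** matrix_inv P)"
  using assms by (simp add: pgl_mult_pgl_proj pgl_inv_pgl_proj)

lemma poly_eq_if_infinite_agreement:
  fixes p q :: "'a::idom poly"
  assumes "infinite {x. poly p x = poly q x}"
  shows "p = q"
proof (rule ccontr)
  assume "p \<noteq> q"
  then have "finite {x. poly (p - q) x = 0}" by (intro poly_roots_finite) simp
  with assms show False by simp
qed

lemma finite_roots_of_unity:
  assumes "n > 0"
  shows "finite {z :: 'a::idom. z ^ n = 1}"
proof -
  have "coeff (monom (1::'a) n - 1) n \<noteq> 0" using assms by simp
  then have "finite {z. poly (monom (1::'a) n - 1) z = 0}"
    by (intro poly_roots_finite) (metis coeff_0)
  then show ?thesis by (simp add: poly_monom)
qed

lemma alg_closed_field_infinite: "infinite (UNIV :: 'a::alg_closed_field set)"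
proof
  assume fin: "finite (UNIV :: 'a set)"
  define q :: "'a poly" where "q = (\<Prod>a\<in>UNIV. [:-a, 1:]) + 1"
  \<comment> \<open>Euclid's argument: \<open>q\<close> is nonconstant, but takes the value \<open>1\<close> everywhere.\<close>
  have "degree (\<Prod>a\<in>UNIV. [:-a, 1:] :: 'a poly) = card (UNIV :: 'a set)"
    by (subst degree_prod_sum_eq) auto
  with finite_UNIV_card_ge_0[OF fin] have "degree q > 0"
    unfolding q_def by (simp add: degree_add_eq_left)
  then obtain x where "poly q x = 0" using alg_closed_imp_poly_has_root by blast
  moreover have "poly (\<Prod>a\<in>UNIV. [:-a, 1:]) x = 0"
    unfolding poly_prod using fin by (intro prod_zero) auto
  ultimately show False by (simp add: q_def)
qed

definition polynomial_matrix :: "('a::comm_semiring_0 \<Rightarrow> 'a^'n^'m) \<Rightarrow> bool" where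
  "polynomial_matrix f \<longleftrightarrow> (\<exists>F. \<forall>t i j. f t $ i $ j = poly (F i j) t)"

lemma polynomial_matrix_mult_left:
  assumes "polynomial_matrix f"
  shows "polynomial_matrix (\<lambda>t. A ** f t)"
proof -
  obtain F where "\<forall>t i j. f t $ i $ j = poly (F i j) t"
    using assms unfolding polynomial_matrix_def by blast
  then show ?thesis unfolding polynomial_matrix_def
    by (intro exI[of _ "\<lambda>i j. \<Sum>k\<in>UNIV. smult (A $ i $ k) (F k j)"])
      (simp add: matrix_matrix_mult_def poly_sum)
qed

lemma polynomial_matrix_mult_right:
  assumes "polynomial_matrix f"
  shows "polynomial_matrix (\<lambda>t. f t ** A)"
proof -
  obtain F where "\<forall>t i j. f t $ i $ j = poly (F i j) t"
    using assms unfolding polynomial_matrix_def by blast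
  then show ?thesis unfolding polynomial_matrix_def
    by (intro exI[of _ "\<lambda>i j. \<Sum>k\<in>UNIV. smult (A $ k $ j) (F i k)"])
      (simp add: matrix_matrix_mult_def poly_sum mult.commute)
qed

lemma polynomial_matrix_det:
  fixes f :: "'a::comm_ring_1 \<Rightarrow> 'a^'n^'n"
  assumes "polynomial_matrix f"
  shows "\<exists>D. \<forall>t. det (f t) = poly D t"
proof -
  obtain F where "\<forall>t i j. f t $ i $ j = poly (F i j) t"
    using assms unfolding polynomial_matrix_def by blast
  then show ?thesis
    by (intro exI[of _ "\<Sum>p\<in>{p. p permutes UNIV}. smult (of_int (sign p)) (\<Prod>i\<in>UNIV. F i (p i))"])
      (simp add: det_def poly_sum poly_prod)
qed

lemma polynomial_matrix_scale_const:
  fixes f g :: "'a::idom \<Rightarrow> 'a^'n^'m"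
  assumes "polynomial_matrix f" and "polynomial_matrix g"
    and "infinite (UNIV :: 'a set)" and "finite (range c)"
    and scale: "\<And>t. f t = matrix_scale (c t) (g t)"
  shows "\<exists>z. \<forall>t. f t = matrix_scale z (g t)"
proof -
  obtain F G where F: "\<And>t i j. f t $ i $ j = poly (F i j) t"
    and G: "\<And>t i j. g t $ i $ j = poly (G i j) t"
    using assms(1,2) unfolding polynomial_matrix_def by metis
  obtain t0 where S: "infinite {t. c t = c t0}"
    using pigeonhole_infinite[OF assms(3,4)] by auto
  have "F i j = smult (c t0) (G i j)" for i j
  proof (rule poly_eq_if_infinite_agreement)
    have "{t. c t = c t0} \<subseteq> {t. poly (F i j) t = poly (smult (c t0) (G i j)) t}"
      using scale by (auto simp: F[symmetric] G[symmetric] matrix_scale_def)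
    with S show "infinite {t. poly (F i j) t = poly (smult (c t0) (G i j)) t}"
      using finite_subset by blast
  qed
  then show ?thesis by (auto simp: vec_eq_iff matrix_scale_def F G)
qed

lemma Ga_hom_GL_polynomial_matrix: "Ga_hom_GL \<phi> \<Longrightarrow> polynomial_matrix \<phi>"
  unfolding Ga_hom_GL_def polynomial_matrix_def by blast

lemma Ga_hom_GL_invertible: "Ga_hom_GL \<phi> \<Longrightarrow> invertible (\<phi> t)"
  unfolding Ga_hom_GL_def by blast

lemma Ga_hom_GL_add: "Ga_hom_GL \<phi> \<Longrightarrow> \<phi> (s + t) = \<phi> s ** \<phi> t"
  unfolding Ga_hom_GL_def by blast

lemma Ga_hom_GL_0:
  assumes "Ga_hom_GL \<phi>"
  shows "\<phi> 0 = mat 1"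
proof -
  have inv: "invertible (\<phi> 0)" using assms by (rule Ga_hom_GL_invertible)
  have "\<phi> 0 = matrix_inv (\<phi> 0) ** (\<phi> 0 ** \<phi> 0)"
    using inv by (simp add: matrix_mul_assoc matrix_inv_left)
  also have "\<dots> = matrix_inv (\<phi> 0) ** \<phi> 0" using Ga_hom_GL_add[OF assms, of 0 0] by simp
  also have "\<dots> = mat 1" using inv by (rule matrix_inv_left)
  finally show ?thesis .
qed

lemma Ga_hom_GL_det:
  fixes \<phi> :: "'a::alg_closed_field \<Rightarrow> 'a^'n^'n"
  assumes "Ga_hom_GL \<phi>"
  shows "det (\<phi> t) = 1"
proof -
  obtain D where D: "\<And>t. det (\<phi> t) = poly D t"
    using polynomial_matrix_det[OF Ga_hom_GL_polynomial_matrix[OF assms]] by blast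
  have "poly D x \<noteq> 0" for x
    using D Ga_hom_GL_invertible[OF assms] invertible_det_nz by metis
  then have "degree D = 0" using alg_closed_imp_poly_has_root by blast
  then have "det (\<phi> t) = poly D 0" using D by (auto elim: degree_eq_zeroE)
  also have "\<dots> = det (\<phi> 0)" using D by simp
  also have "\<dots> = 1" by (simp add: Ga_hom_GL_0[OF assms])
  finally show ?thesis .
qed

lemma Ga_hom_GL_conj:
  fixes P :: "'a::field^'n^'n"
  assumes "Ga_hom_GL \<phi>" and "invertible P"
  shows "Ga_hom_GL (\<lambda>t. P ** \<phi> t ** matrix_inv P)"
proof -
  have "(P ** \<phi> s ** matrix_inv P) ** (P ** \<phi> t ** matrix_inv P)
          = P ** \<phi> (s + t) ** matrix_inv P" for s t
  proof -
    have "(P ** \<phi> s ** matrix_inv P) ** (P ** \<phi> t ** matrix_inv P)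
            = P ** \<phi> s ** (matrix_inv P ** P) ** \<phi> t ** matrix_inv P"
      by (simp only: matrix_mul_assoc)
    also have "\<dots> = P ** \<phi> s ** \<phi> t ** matrix_inv P"
      using assms(2) by (simp add: matrix_inv_left)
    also have "\<dots> = P ** \<phi> (s + t) ** matrix_inv P"
      using assms(1) by (simp add: Ga_hom_GL_add matrix_mul_assoc)
    finally show ?thesis .
  qed
  moreover have "polynomial_matrix (\<lambda>t. P ** \<phi> t ** matrix_inv P)"
    by (intro polynomial_matrix_mult_right polynomial_matrix_mult_left
        Ga_hom_GL_polynomial_matrix assms(1))
  ultimately show ?thesis
    using assms by (auto simp: Ga_hom_GL_def polynomial_matrix_def
        intro!: invertible_mult invertible_matrix_inv)
qed

lemma Ga_hom_GL_pgl_proj_inj: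
  fixes \<phi> \<psi> :: "'a::alg_closed_field \<Rightarrow> 'a^'n^'n"
  assumes \<phi>: "Ga_hom_GL \<phi>" and \<psi>: "Ga_hom_GL \<psi>"
    and proj_eq: "\<And>t. pgl_proj (\<phi> t) = pgl_proj (\<psi> t)"
  shows "\<phi> = \<psi>"
proof -
  obtain c where c: "\<And>t. \<phi> t = matrix_scale (c t) (\<psi> t)"
    using pgl_proj_eqD[OF proj_eq] by metis
  have "c t ^ CARD('n) = 1" for t
    using arg_cong[OF c[of t], of det] by (simp add: det_matrix_scale Ga_hom_GL_det \<phi> \<psi>)
  then have "finite (range c)"
    by (intro finite_subset[OF _ finite_roots_of_unity[of "CARD('n)"]]) auto
  then obtain z where z: "\<And>t. \<phi> t = matrix_scale z (\<psi> t)"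
    using polynomial_matrix_scale_const[OF Ga_hom_GL_polynomial_matrix[OF \<phi>]
        Ga_hom_GL_polynomial_matrix[OF \<psi>] alg_closed_field_infinite _ c] by blast
  have "matrix_scale z (mat 1 :: 'a^'n^'n) = mat 1"
    using z[of 0] by (simp add: Ga_hom_GL_0 \<phi> \<psi>)
  then have "z = 1" by (simp add: matrix_scale_mat_1_eq_mat_1_iff)
  with z show ?thesis by auto
qed

theorem lemma1p7:
  fixes \<phi>1 \<phi>2 :: "'k::alg_closed_field \<Rightarrow> 'k^'n^'n"
    and \<theta>1 \<theta>2 :: "'k \<Rightarrow> ('k^'n^'n) set"
  assumes "Ga_hom_GL \<phi>1" and "Ga_hom_GL \<phi>2"
    and "\<theta>1 = pgl_proj \<circ> \<phi>1" and "\<theta>2 = pgl_proj \<circ> \<phi>2"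
  shows "(\<exists>P :: 'k^'n^'n. invertible P \<and>
            (\<forall>t. \<theta>2 t = pgl_mult (pgl_mult (pgl_proj P) (\<theta>1 t)) (pgl_inv (pgl_proj P))))
         \<longleftrightarrow>
         (\<exists>Q :: 'k^'n^'n. invertible Q \<and>
            (\<forall>t. \<phi>2 t = Q ** \<phi>1 t ** matrix_inv Q))"
proof -
  have "(\<forall>t. \<theta>2 t = pgl_mult (pgl_mult (pgl_proj P) (\<theta>1 t)) (pgl_inv (pgl_proj P)))
          \<longleftrightarrow> (\<forall>t. \<phi>2 t = P ** \<phi>1 t ** matrix_inv P)"
    if P: "invertible P" for P
  proof -
    have "(\<forall>t. \<theta>2 t = pgl_mult (pgl_mult (pgl_proj P) (\<theta>1 t)) (pgl_inv (pgl_proj P)))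
            \<longleftrightarrow> (\<forall>t. pgl_proj (\<phi>2 t) = pgl_proj (P ** \<phi>1 t ** matrix_inv P))"
      using P assms(3,4) by (simp add: pgl_conj_pgl_proj)
    also have "\<dots> \<longleftrightarrow> (\<forall>t. \<phi>2 t = P ** \<phi>1 t ** matrix_inv P)"
      using Ga_hom_GL_pgl_proj_inj[OF assms(2) Ga_hom_GL_conj[OF assms(1) P]] by metis
    finally show ?thesis .
  qed
  then show ?thesis by blast
qed

end
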